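(* Let $f:\mathbb{R}^n\to\mathbb{R}$ be a convex, continuously differentiable function with locally Lipschitz gradient, with $\mathcal{X}^*:=\arg\min f\neq\emptyset$ and optimal value $f^*$, and assume $f$ is locally strongly convex. Let $x^0$ be such that $\Lambda(x^0):=\{x:f(x)\le f(x^0)\}$ is bounded; let $r:=\max\{\|x\|:x\in\Lambda(x^0)\}$, $\Omega:=\overline{B}(0;5r)$, let $L_\Omega>0$ satisfy $\|\nabla f(x)-\nabla f(y)\|\le L_\Omega\|x-y\|$ on $\Omega$, and let $\mu_\Omega:=\inf_{x,y\in\Omega,x\neq y}\frac{\langle\nabla f(y)-\nabla f(x),y-x\rangle}{\|y-x\|^2}$; assume $\mu_\Omega<L_\Omega$. Let $(x^k)$ be generated by $x^{k+1}=x^k-\alpha_k\nabla f(x^k)$ with $\alpha_k\in[\bar\alpha,1/L_\Omega]$, where $0<\bar\alpha<1/L_\Omega$. Let $x^*$ be an optimal solution, $q_0:=\frac{2\bar\alpha\mu_\Omega L_\Omega}{\mu_\Omega+L_\Omega}$, $q_1:=\frac{\mu_\Omega^2\bar\alpha^2}{4}$. Then: (a) $\|x^{k+1}-x^*\|^2\le(1-q_0)\|x^k-x^*\|^2$ and $f(x^{k+1})-f^*\le(1-q_1)(f(x^k)-f^* )$ for all $k\in\mathbb{N}_0$; i.e. $(\|x^k-x^*\|)$ and $(f(x^k)-f^* )$ converge Q-linearly to $0$ with rates $\sqrt{1-q_0}$ and $1-q_1$; (b) $\|\nabla f(x^k)\|\le\frac{\sqrt2 L_\Omega}{\sqrt{\mu_\Omega}}(f(x^0)-f^*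 )^{1/2}(1-q_1)^{k/2}$ for all $k\in\mathbb{N}_0$.
   Context: $f$ is locally strongly convex if every $x$ has $\delta_x>0$, $\mu_x>0$ such that $f(y)\ge f(z)+\langle\nabla f(z),y-z\rangle+\frac{\mu_x}{2}\|y-z\|^2$ for all $y,z\in B(x;\delta_x)$. Here $\Omega$ is the set $\overline B(0;(1+2(1+\nu)^{1/\nu})r)$ with $\nu=1$. *)

theory Defs
  imports "HOL-Analysis.Analysis"
begin

definition loc_strongly_convex :: "('a::euclidean_space \<Rightarrow> real) \<Rightarrow> ('a \<Rightarrow> 'a) \<Rightarrow> bool" where
  "loc_strongly_convex f g \<longleftrightarrow>
     (\<forall>x. \<exists>\<delta>>0. \<exists>\<mu>>0. \<forall>y\<in>ball x \<delta>. \<forall>z\<in>ball x \<delta>.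
        f y \<ge> f z + inner (g z) (y - z) + \<mu> / 2 * (norm (y - z))\<^sup>2)"

definition loc_lipschitz_map :: "('a::metric_space \<Rightarrow> 'b::metric_space) \<Rightarrow> bool" where
  "loc_lipschitz_map g \<longleftrightarrow>
     (\<forall>x. \<exists>\<delta>>0. \<exists>K. \<forall>y\<in>ball x \<delta>. \<forall>z\<in>ball x \<delta>. dist (g y) (g z) \<le> K * dist y z)"

end

theory Submission
  imports Defs
begin

text \<open>
  By compactness, local strong convexity makes \<open>g\<close> strongly monotone on \<open>\<Omega>\<close>, so
  \<open>\<mu> = \<mu>\<^sub>\<Omega> > 0\<close>, and \<open>f\<close> lies between the quadratic models with curvatures \<open>\<mu>\<close> and \<open>L\<close>
  on \<open>\<Omega>\<close>. The iterates stay in the sublevel set, hence in \<open>cball 0 r\<close>, and steps of length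
  at most \<open>1 / L\<close> stay in \<open>\<Omega>\<close>. The descent lemma combined with the Polyak-Lojasiewicz
  inequality \<open>2 \<mu> (f y - f xs) \<le> \<parallel>g y\<parallel>\<^sup>2\<close> contracts function values, even with the
  better rate \<open>1 - \<mu> \<alpha>bar\<close>; the cocoercivity inequality of smooth strongly convex functions,
  \<open>\<parallel>g y\<parallel>\<^sup>2 + \<mu> L \<parallel>y - xs\<parallel>\<^sup>2 \<le> (\<mu> + L) \<langle>g y, y - xs\<rangle>\<close>, which only needs
  the bounds on \<open>\<Omega>\<close>, contracts distances. Finally
  \<open>\<parallel>g y\<parallel>\<^sup>2 \<le> L\<^sup>2 \<parallel>y - xs\<parallel>\<^sup>2 \<le> 2 L\<^sup>2 / \<mu> (f y - f xs)\<close>.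
\<close>

lemma has_real_derivative_along_line:
  fixes f :: "'a::real_inner \<Rightarrow> real"
  assumes "GDERIV f (u + t *\<^sub>R d) :> g"
  shows "((\<lambda>t. f (u + t *\<^sub>R d)) has_real_derivative inner g d) (at t)"
proof -
  have "((\<lambda>t. u + t *\<^sub>R d) has_derivative (\<lambda>s. s *\<^sub>R d)) (at t)"
    by (auto intro!: derivative_eq_intros)
  from has_derivative_compose[OF this assms[unfolded gderiv_def]]
  show ?thesis
    by (simp add: o_def has_field_derivative_def inner_commute mult.commute[of _ "inner d _"])
qed

lemma quadratic_upper_bound_along_segment:
  fixes f :: "'a::real_inner \<Rightarrow> real"
  assumes grad: "\<And>y. GDERIV f y :> g y"
    and slope: "\<And>t. 0 \<le> t \<Longrightarrow> t \<le> 1 \<Longrightarrow>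
      inner (g (x + t *\<^sub>R (z - x)) - g x) (z - x) \<le> c * t * (norm (z - x))\<^sup>2"
  shows "f z \<le> f x + inner (g x) (z - x) + c / 2 * (norm (z - x))\<^sup>2"
proof -
  define h where
    "h t = f (x + t *\<^sub>R (z - x)) - t * inner (g x) (z - x) - c / 2 * t\<^sup>2 * (norm (z - x))\<^sup>2" for t
  have "h 1 \<le> h 0"
  proof (rule DERIV_nonpos_imp_nonincreasing[of 0 1 h])
    fix t :: real assume t: "0 \<le> t" "t \<le> 1"
    have "(h has_real_derivative
            inner (g (x + t *\<^sub>R (z - x)) - g x) (z - x) - c * t * (norm (z - x))\<^sup>2) (at t)"
      unfolding h_def using has_real_derivative_along_line[OF grad[of "x + t *\<^sub>R (z - x)"]]
      by (auto intro!: derivative_eq_intros simp: inner_diff_left)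
    with slope[OF t] show "\<exists>y. (h has_real_derivative y) (at t) \<and> y \<le> 0" by auto
  qed simp
  then show ?thesis by (simp add: h_def)
qed

lemma quadratic_lower_bound_along_segment:
  fixes f :: "'a::real_inner \<Rightarrow> real"
  assumes grad: "\<And>y. GDERIV f y :> g y"
    and slope: "\<And>t. 0 \<le> t \<Longrightarrow> t \<le> 1 \<Longrightarrow>
      c * t * (norm (z - x))\<^sup>2 \<le> inner (g (x + t *\<^sub>R (z - x)) - g x) (z - x)"
  shows "f x + inner (g x) (z - x) + c / 2 * (norm (z - x))\<^sup>2 \<le> f z"
proof -
  have "- f z \<le> - f x + inner (- g x) (z - x) + (- c) / 2 * (norm (z - x))\<^sup>2"
  proof (rule quadratic_upper_bound_along_segment)
    show "GDERIV (\<lambda>y. - f y) y :> - g y" for y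
      by (rule GDERIV_minus[OF grad])
    show "inner (- g (x + t *\<^sub>R (z - x)) - - g x) (z - x) \<le> - c * t * (norm (z - x))\<^sup>2"
      if "0 \<le> t" "t \<le> 1" for t
      using slope[OF that] by (simp add: inner_diff_left)
  qed
  then show ?thesis by simp
qed

lemma lipschitz_gradient_imp_quadratic_upper_bound:
  fixes f :: "'a::real_inner \<Rightarrow> real"
  assumes grad: "\<And>y. GDERIV f y :> g y" and S: "convex S"
    and lip: "\<And>y z. y \<in> S \<Longrightarrow> z \<in> S \<Longrightarrow> norm (g y - g z) \<le> L * norm (y - z)"
    and u: "u \<in> S" and w: "w \<in> S"
  shows "f w \<le> f u + inner (g u) (w - u) + L / 2 * (norm (w - u))\<^sup>2"
proof (rule quadratic_upper_bound_along_segment[OF grad])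
  fix t :: real assume t: "0 \<le> t" "t \<le> 1"
  define p where "p = u + t *\<^sub>R (w - u)"
  have "p \<in> S"
    using convexD_alt[OF S u w t] by (simp add: p_def algebra_simps)
  have "inner (g p - g u) (w - u) \<le> norm (g p - g u) * norm (w - u)"
    by (rule norm_cauchy_schwarz)
  also have "\<dots> \<le> L * norm (p - u) * norm (w - u)"
    using lip[OF \<open>p \<in> S\<close> u] by (simp add: mult_right_mono)
  also have "\<dots> = L * t * (norm (w - u))\<^sup>2"
    using t by (simp add: p_def power2_eq_square)
  finally show "inner (g (u + t *\<^sub>R (w - u)) - g u) (w - u) \<le> L * t * (norm (w - u))\<^sup>2"
    unfolding p_def .
qed

lemma strongly_monotone_gradient_imp_quadratic_lower_bound:
  fixes f :: "'a::real_inner \<Rightarrow> real"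
  assumes grad: "\<And>y. GDERIV f y :> g y" and S: "convex S"
    and mono: "\<And>y z. y \<in> S \<Longrightarrow> z \<in> S \<Longrightarrow> \<mu> * (norm (z - y))\<^sup>2 \<le> inner (g z - g y) (z - y)"
    and u: "u \<in> S" and w: "w \<in> S"
  shows "f u + inner (g u) (w - u) + \<mu> / 2 * (norm (w - u))\<^sup>2 \<le> f w"
proof (rule quadratic_lower_bound_along_segment[OF grad])
  fix t :: real assume t: "0 \<le> t" "t \<le> 1"
  define p where "p = u + t *\<^sub>R (w - u)"
  have "p \<in> S"
    using convexD_alt[OF S u w t] by (simp add: p_def algebra_simps)
  have "p - u = t *\<^sub>R (w - u)"
    by (simp add: p_def)
  from mono[OF u \<open>p \<in> S\<close>, unfolded this]
  have "t * (\<mu> * t * (norm (w - u))\<^sup>2) \<le> t * inner (g p - g u) (w - u)"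
    using t by (simp add: power2_eq_square mult_ac)
  then show "\<mu> * t * (norm (w - u))\<^sup>2 \<le> inner (g (u + t *\<^sub>R (w - u)) - g u) (w - u)"
    using t by (cases "t = 0") (auto simp: p_def)
qed

lemma convex_on_imp_above_gradient_tangent:
  fixes f :: "'a::real_inner \<Rightarrow> real"
  assumes grad: "GDERIV f u :> g" and cvx: "convex_on UNIV f"
  shows "f u + inner g (v - u) \<le> f v"
proof -
  define \<phi> where "\<phi> t = f (u + t *\<^sub>R (v - u))" for t
  have cvx_\<phi>: "convex_on UNIV \<phi>"
  proof (rule convex_onI)
    fix s a b :: real assume "0 < s" "s < 1"
    have "u + ((1 - s) *\<^sub>R a + s *\<^sub>R b) *\<^sub>R (v - u)
        = (1 - s) *\<^sub>R (u + a *\<^sub>R (v - u)) + s *\<^sub>R (u + b *\<^sub>R (v - u))"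
      by (simp add: algebra_simps)
    then show "\<phi> ((1 - s) *\<^sub>R a + s *\<^sub>R b) \<le> (1 - s) * \<phi> a + s * \<phi> b"
      unfolding \<phi>_def using convex_onD[OF cvx, of s] \<open>0 < s\<close> \<open>s < 1\<close> by simp
  qed simp
  have "(\<phi> has_field_derivative inner g (v - u)) (at 0 within UNIV)"
    unfolding \<phi>_def using has_real_derivative_along_line[of f u 0 "v - u"] grad by simp
  then have "inner g (v - u) * (1 - 0) \<le> \<phi> 1 - \<phi> 0"
    by (rule convex_on_imp_above_tangent[OF cvx_\<phi>, rotated 3]) auto
  then show ?thesis by (simp add: \<phi>_def)
qed

lemma convex_on_imp_gradient_monotone:
  fixes f :: "'a::real_inner \<Rightarrow> real"
  assumes grad: "\<And>y. GDERIV f y :> g y" and cvx: "convex_on UNIV f"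
  shows "0 \<le> inner (g v - g u) (v - u)"
  using convex_on_imp_above_gradient_tangent[OF grad cvx, of u v]
    convex_on_imp_above_gradient_tangent[OF grad cvx, of v u]
  by (simp add: inner_diff_left inner_diff_right inner_commute)

lemma gradient_eq_0_at_minimum:
  fixes f :: "'a::real_inner \<Rightarrow> real"
  assumes grad: "GDERIV f x :> d" and min: "\<And>y. f x \<le> f y"
  shows "d = 0"
proof -
  have "(\<lambda>h. inner h d) = (\<lambda>h. 0)"
    using grad unfolding gderiv_def by (rule has_derivative_local_min) (simp add: min)
  then have "inner d d = 0" by metis
  then show ?thesis by simp
qed

lemma loc_strongly_convex_imp_locally_strongly_monotone:
  assumes "loc_strongly_convex f g"
  shows "\<exists>\<delta>>0. \<exists>\<mu>>0. \<forall>y\<in>ball x \<delta>. \<forall>z\<in>ball x \<delta>.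
           \<mu> * (norm (y - z))\<^sup>2 \<le> inner (g y - g z) (y - z)"
proof -
  obtain \<delta> \<mu> where "0 < \<delta>" "0 < \<mu>" and lsc: "\<forall>y\<in>ball x \<delta>. \<forall>z\<in>ball x \<delta>.
      f z + inner (g z) (y - z) + \<mu> / 2 * (norm (y - z))\<^sup>2 \<le> f y"
    using assms unfolding loc_strongly_convex_def by metis
  have "\<mu> * (norm (y - z))\<^sup>2 \<le> inner (g y - g z) (y - z)"
    if "y \<in> ball x \<delta>" "z \<in> ball x \<delta>" for y z
  proof -
    have "f z + inner (g z) (y - z) + \<mu> / 2 * (norm (y - z))\<^sup>2 \<le> f y"
      "f y + inner (g y) (z - y) + \<mu> / 2 * (norm (z - y))\<^sup>2 \<le> f z"
      using lsc that by blast+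
    then show ?thesis
      using norm_minus_commute[of z y] by (simp add: inner_diff_left inner_diff_right inner_commute)
  qed
  with \<open>0 < \<delta>\<close> \<open>0 < \<mu>\<close> show ?thesis by blast
qed

lemma locally_strongly_monotone_imp_uniformly_on_compact:
  fixes g :: "'a::real_inner \<Rightarrow> 'a"
  assumes "compact K"
    and local: "\<And>x. x \<in> K \<Longrightarrow> \<exists>\<delta>>0. \<exists>\<mu>>0. \<forall>y\<in>ball x \<delta>. \<forall>z\<in>ball x \<delta>.
                  \<mu> * (norm (y - z))\<^sup>2 \<le> inner (g y - g z) (y - z)"
  obtains \<epsilon> m where "0 < \<epsilon>" "0 < m"
    "\<And>u w. u \<in> K \<Longrightarrow> dist u w < \<epsilon> \<Longrightarrow> m * (norm (w - u))\<^sup>2 \<le> inner (g w - g u) (w - u)"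
proof -
  obtain \<delta> \<mu> where pos: "\<And>x. x \<in> K \<Longrightarrow> 0 < \<delta> x \<and> 0 < \<mu> x"
    and loc: "\<And>x y z. x \<in> K \<Longrightarrow> y \<in> ball x (\<delta> x) \<Longrightarrow> z \<in> ball x (\<delta> x) \<Longrightarrow>
                \<mu> x * (norm (y - z))\<^sup>2 \<le> inner (g y - g z) (y - z)"
    using local by metis
  obtain C where C: "C \<subseteq> K" "finite C" "K \<subseteq> (\<Union>c\<in>C. ball c (\<delta> c / 2))"
    by (rule compactE_image[OF \<open>compact K\<close>, of K "\<lambda>c. ball c (\<delta> c / 2)"]) (use pos in auto)
  define \<epsilon> where "\<epsilon> = Min (insert 1 ((\<lambda>c. \<delta> c / 2) ` C))"
  define m where "m = Min (insert 1 (\<mu> ` C))"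
  have "0 < \<epsilon>" "0 < m"
    using C pos by (auto simp: \<epsilon>_def m_def)
  moreover have "m * (norm (w - u))\<^sup>2 \<le> inner (g w - g u) (w - u)"
    if "u \<in> K" "dist u w < \<epsilon>" for u w
  proof -
    obtain c where c: "c \<in> C" "u \<in> ball c (\<delta> c / 2)"
      using C \<open>u \<in> K\<close> by blast
    have "\<epsilon> \<le> \<delta> c / 2"
      unfolding \<epsilon>_def by (rule Min_le) (use c C in auto)
    have "m \<le> \<mu> c"
      unfolding m_def by (rule Min_le) (use c C in auto)
    have "dist c u < \<delta> c / 2" "0 \<le> dist c u"
      using c by auto
    then have "dist c u < \<delta> c" "dist c w < \<delta> c"
      using that \<open>\<epsilon> \<le> \<delta> c / 2\<close> dist_triangle[of c w u] by linarith+
    then have "u \<in> ball c (\<delta> c)" "w \<in> ball c (\<delta> c)"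
      by simp_all
    with loc c C have "\<mu> c * (norm (w - u))\<^sup>2 \<le> inner (g w - g u) (w - u)"
      by blast
    with \<open>m \<le> \<mu> c\<close> show ?thesis
      by (meson order_trans mult_right_mono zero_le_power2)
  qed
  ultimately show ?thesis using that by blast
qed

lemma monotone_and_nearby_strongly_monotone_imp_strongly_monotone:
  fixes g :: "'a::real_inner \<Rightarrow> 'a"
  assumes K: "convex K" "bounded K"
    and mono: "\<And>u v. u \<in> K \<Longrightarrow> v \<in> K \<Longrightarrow> 0 \<le> inner (g v - g u) (v - u)"
    and "0 < \<epsilon>" "0 < m"
    and near: "\<And>u w. u \<in> K \<Longrightarrow> w \<in> K \<Longrightarrow> dist u w < \<epsilon> \<Longrightarrow>
                 m * (norm (w - u))\<^sup>2 \<le> inner (g w - g u) (w - u)"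
  obtains m' where "0 < m'"
    "\<And>u v. u \<in> K \<Longrightarrow> v \<in> K \<Longrightarrow> m' * (norm (v - u))\<^sup>2 \<le> inner (g v - g u) (v - u)"
proof -
  obtain B where "0 < B" and B: "\<And>x. x \<in> K \<Longrightarrow> norm x \<le> B"
    using K(2) unfolding bounded_pos by blast
  define m' where "m' = min m (m * \<epsilon> / (4 * B))"
  have "m' * (norm (v - u))\<^sup>2 \<le> inner (g v - g u) (v - u)" if u: "u \<in> K" and v: "v \<in> K" for u v
  proof (cases "norm (v - u) < \<epsilon>")
    case True
    then have "m * (norm (v - u))\<^sup>2 \<le> inner (g v - g u) (v - u)"
      using near[OF u v] by (simp add: dist_norm norm_minus_commute)
    moreover have "m' \<le> m" by (simp add: m'_def)
    ultimately show ?thesis by (meson order_trans mult_right_mono zero_le_power2)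
  next
    case False
    text \<open>Go from \<open>u\<close> towards \<open>v\<close> by \<open>\<epsilon> / 2\<close>; monotonicity controls the rest of the way.\<close>
    define n where "n = norm (v - u)"
    have "\<epsilon> \<le> n" "0 < n" "n \<le> 2 * B"
      using False \<open>0 < \<epsilon>\<close> B[OF u] B[OF v] norm_triangle_ineq4[of v u] by (auto simp: n_def)
    define s where "s = \<epsilon> / (2 * n)"
    have s: "0 < s" "s < 1"
      using \<open>\<epsilon> \<le> n\<close> \<open>0 < \<epsilon>\<close> by (auto simp: s_def field_simps)
    define w where "w = u + s *\<^sub>R (v - u)"
    have "w \<in> K"
      using convexD_alt[OF K(1) u v, of s] s by (simp add: w_def algebra_simps)
    have wu: "w - u = s *\<^sub>R (v - u)"
      by (simp add: w_def)
    have "norm (w - u) = \<epsilon> / 2"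
      using s \<open>0 < n\<close> \<open>0 < \<epsilon>\<close> by (simp add: wu s_def n_def)
    then have "m * (norm (w - u))\<^sup>2 \<le> inner (g w - g u) (w - u)"
      using near[OF u \<open>w \<in> K\<close>] \<open>0 < \<epsilon>\<close> by (simp add: dist_norm norm_minus_commute)
    then have "s * (m * s * n\<^sup>2) \<le> s * inner (g w - g u) (v - u)"
      using s by (simp add: wu n_def power2_eq_square mult_ac)
    then have "m * s * n\<^sup>2 \<le> inner (g w - g u) (v - u)"
      using s by simp
    moreover have "m * s * n\<^sup>2 = m * \<epsilon> / 2 * n"
      using \<open>0 < n\<close> by (simp add: s_def power2_eq_square)
    ultimately have near_part: "m * \<epsilon> / 2 * n \<le> inner (g w - g u) (v - u)"
      by simp
    have "v - w = (1 - s) *\<^sub>R (v - u)"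
      by (simp add: w_def algebra_simps)
    with mono[OF \<open>w \<in> K\<close> v] have "0 \<le> (1 - s) * inner (g v - g w) (v - u)"
      by simp
    with s have far_part: "0 \<le> inner (g v - g w) (v - u)"
      by (simp add: zero_le_mult_iff)
    have "m' * n\<^sup>2 \<le> m * \<epsilon> / (4 * B) * n\<^sup>2"
      by (intro mult_right_mono) (simp_all add: m'_def)
    also have "\<dots> \<le> m * \<epsilon> / 2 * n"
      using \<open>n \<le> 2 * B\<close> \<open>0 < n\<close> \<open>0 < B\<close> \<open>0 < m\<close> \<open>0 < \<epsilon>\<close>
      by (simp add: power2_eq_square field_simps mult_right_mono)
    also have "\<dots> \<le> inner (g v - g u) (v - u)"
      using near_part far_part by (simp add: inner_diff_left)
    finally show ?thesis by (simp add: n_def)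
  qed
  moreover have "0 < m'"
    using \<open>0 < m\<close> \<open>0 < \<epsilon>\<close> \<open>0 < B\<close> by (simp add: m'_def)
  ultimately show ?thesis using that by blast
qed

lemma loc_strongly_convex_imp_strongly_monotone_on:
  fixes f :: "'a::euclidean_space \<Rightarrow> real"
  assumes grad: "\<And>y. GDERIV f y :> g y" and cvx: "convex_on UNIV f"
    and lsc: "loc_strongly_convex f g" and K: "compact K" "convex K"
  obtains m where "0 < m"
    "\<And>u v. u \<in> K \<Longrightarrow> v \<in> K \<Longrightarrow> m * (norm (v - u))\<^sup>2 \<le> inner (g v - g u) (v - u)"
proof -
  obtain \<epsilon> m where "0 < \<epsilon>" "0 < m" and near:
    "\<And>u w. u \<in> K \<Longrightarrow> dist u w < \<epsilon> \<Longrightarrow> m * (norm (w - u))\<^sup>2 \<le> inner (g w - g u) (w - u)"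
    using locally_strongly_monotone_imp_uniformly_on_compact[OF K(1)
        loc_strongly_convex_imp_locally_strongly_monotone[OF lsc]] by blast
  show ?thesis
    by (rule monotone_and_nearby_strongly_monotone_imp_strongly_monotone[OF
          K(2) compact_imp_bounded[OF K(1)] convex_on_imp_gradient_monotone[OF grad cvx]
          \<open>0 < \<epsilon>\<close> \<open>0 < m\<close> near that])
qed

definition monotonicity_modulus :: "('a::real_inner \<Rightarrow> 'a) \<Rightarrow> 'a set \<Rightarrow> real" where
  "monotonicity_modulus g K =
     Inf {inner (g v - g u) (v - u) / (norm (v - u))\<^sup>2 | u v. u \<in> K \<and> v \<in> K \<and> u \<noteq> v}"

lemma
  fixes g :: "'a::real_inner \<Rightarrow> 'a"
  assumes strong: "\<And>u v. u \<in> K \<Longrightarrow> v \<in> K \<Longrightarrow> m * (norm (v - u))\<^sup>2 \<le> inner (g v - g u) (v - u)"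
  shows monotonicity_modulus_greatest:
      "\<lbrakk>u \<in> K; v \<in> K; u \<noteq> v\<rbrakk> \<Longrightarrow> m \<le> monotonicity_modulus g K"
    and strongly_monotone_monotonicity_modulus:
      "\<lbrakk>u \<in> K; v \<in> K\<rbrakk> \<Longrightarrow>
         monotonicity_modulus g K * (norm (v - u))\<^sup>2 \<le> inner (g v - g u) (v - u)"
proof -
  define Q where "Q = {inner (g v - g u) (v - u) / (norm (v - u))\<^sup>2 | u v. u \<in> K \<and> v \<in> K \<and> u \<noteq> v}"
  have lower: "m \<le> q" if "q \<in> Q" for q
    using that strong by (auto simp: Q_def field_simps)
  show "m \<le> monotonicity_modulus g K" if "u \<in> K" "v \<in> K" "u \<noteq> v"
  proof -
    have "Q \<noteq> {}" using that unfolding Q_def by blast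
    then show ?thesis
      unfolding monotonicity_modulus_def Q_def[symmetric] by (rule cInf_greatest) (rule lower)
  qed
  show "monotonicity_modulus g K * (norm (v - u))\<^sup>2 \<le> inner (g v - g u) (v - u)"
    if "u \<in> K" "v \<in> K"
  proof (cases "u = v")
    case False
    then have "inner (g v - g u) (v - u) / (norm (v - u))\<^sup>2 \<in> Q"
      using that unfolding Q_def by blast
    then have "monotonicity_modulus g K \<le> inner (g v - g u) (v - u) / (norm (v - u))\<^sup>2"
      unfolding monotonicity_modulus_def Q_def[symmetric]
      by (rule cInf_lower) (meson bdd_belowI lower)
    with False show ?thesis by (simp add: field_simps)
  qed simp
qed

lemma loc_strongly_convex_monotonicity_modulus_cball:
  fixes f :: "'a::euclidean_space \<Rightarrow> real"
  assumes grad: "\<And>y. GDERIV f y :> g y" and cvx: "convex_on UNIV f"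
    and lsc: "loc_strongly_convex f g" and "0 < R"
  shows "0 < monotonicity_modulus g (cball 0 R)"
    and "\<And>u v. u \<in> cball 0 R \<Longrightarrow> v \<in> cball 0 R \<Longrightarrow>
           monotonicity_modulus g (cball 0 R) * (norm (v - u))\<^sup>2 \<le> inner (g v - g u) (v - u)"
proof -
  obtain m where "0 < m" and strong:
    "\<And>u v. u \<in> cball 0 R \<Longrightarrow> v \<in> cball 0 R \<Longrightarrow> m * (norm (v - u))\<^sup>2 \<le> inner (g v - g u) (v - u)"
    using loc_strongly_convex_imp_strongly_monotone_on[OF grad cvx lsc compact_cball convex_cball]
    by blast
  obtain v :: 'a where "norm v = R"
    using vector_choose_size[OF less_imp_le[OF \<open>0 < R\<close>]] by blast
  with \<open>0 < R\<close> have "(0::'a) \<in> cball 0 R" "v \<in> cball 0 R" "0 \<noteq> v"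
    by auto
  then have "m \<le> monotonicity_modulus g (cball 0 R)"
    using monotonicity_modulus_greatest[of "cball 0 R" m g, OF strong] by blast
  with \<open>0 < m\<close> show "0 < monotonicity_modulus g (cball 0 R)"
    by simp
  show "monotonicity_modulus g (cball 0 R) * (norm (v - u))\<^sup>2 \<le> inner (g v - g u) (v - u)"
    if "u \<in> cball 0 R" "v \<in> cball 0 R" for u v
    by (rule strongly_monotone_monotonicity_modulus[OF strong that])
qed

lemma cocoercivity_from_quadratic_bounds:
  fixes \<psi> :: "'a::real_inner \<Rightarrow> real"
  assumes lower: "\<And>u w. u \<in> S \<Longrightarrow> w \<in> S \<Longrightarrow> \<psi> u + inner (d u) (w - u) \<le> \<psi> w"
    and upper: "\<And>u w. u \<in> S \<Longrightarrow> w \<in> S \<Longrightarrow>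
                  \<psi> w \<le> \<psi> u + inner (d u) (w - u) + l / 2 * (norm (w - u))\<^sup>2"
    and "0 < l" and x: "x \<in> S" and y: "y \<in> S"
    and room: "\<And>t. 0 \<le> t \<Longrightarrow> t * norm (d x - d y) \<le> 2 * norm (x - y) \<Longrightarrow>
                 x - t *\<^sub>R (d x - d y) \<in> S \<and> y + t *\<^sub>R (d x - d y) \<in> S"
  shows "(norm (d x - d y))\<^sup>2 \<le> l * inner (d x - d y) (x - y)"
proof -
  define G where "G = d x - d y"
  define D where "D = norm (x - y)"
  have test: "(2 * t - l * t\<^sup>2) * (norm G)\<^sup>2 \<le> inner G (x - y)"
    if "0 \<le> t" "t * norm G \<le> 2 * D" for t
  proof -
    have S: "x - t *\<^sub>R G \<in> S" "y + t *\<^sub>R G \<in> S"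
      using room[OF that[unfolded G_def D_def]] by (simp_all add: G_def)
    have "\<psi> y + inner (d y) (x - t *\<^sub>R G - y) \<le> \<psi> (x - t *\<^sub>R G)"
      "\<psi> (x - t *\<^sub>R G) \<le> \<psi> x + inner (d x) (- t *\<^sub>R G) + l / 2 * (t * norm G)\<^sup>2"
      "\<psi> x + inner (d x) (y + t *\<^sub>R G - x) \<le> \<psi> (y + t *\<^sub>R G)"
      "\<psi> (y + t *\<^sub>R G) \<le> \<psi> y + inner (d y) (t *\<^sub>R G) + l / 2 * (t * norm G)\<^sup>2"
      using lower[OF y S(1)] upper[OF x S(1)] lower[OF x S(2)] upper[OF y S(2)] that(1)
      by (simp_all add: algebra_simps)
    then have "2 * t * inner G G \<le> inner G (x - y) + l * (t * norm G)\<^sup>2"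
      by (simp add: G_def inner_diff_left inner_diff_right inner_add_right inner_commute algebra_simps)
    then show ?thesis
      by (simp add: dot_square_norm power2_eq_square algebra_simps)
  qed
  text \<open>The usual proof tests the bounds at step length \<open>1 / l\<close>, which is admissible
    only when \<open>norm G \<le> 2 * l * D\<close>; the longest admissible step shows that this is always so.\<close>
  have "norm G \<le> 2 * l * D"
  proof (rule ccontr)
    assume long: "\<not> norm G \<le> 2 * l * D"
    have "0 < D"
      using long \<open>0 < l\<close> by (cases "x = y") (auto simp: G_def D_def)
    with \<open>0 < l\<close> have "0 < 2 * l * D"
      by simp
    with long have "0 < norm G"
      by linarith
    from test[of "2 * D / norm G"] \<open>0 < D\<close> \<open>0 < norm G\<close>
    have "4 * D * norm G - 4 * l * D\<^sup>2 \<le> inner G (x - y)"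
      by (simp add: power2_eq_square field_simps)
    also have "\<dots> \<le> norm G * D"
      unfolding D_def by (rule norm_cauchy_schwarz)
    finally have "D * (3 * norm G) \<le> D * (4 * l * D)"
      by (simp add: power2_eq_square algebra_simps)
    with \<open>0 < D\<close> have "3 * norm G \<le> 4 * l * D"
      by simp
    with long \<open>0 < norm G\<close> show False
      by linarith
  qed
  with test[of "1 / l"] \<open>0 < l\<close> have "(norm G)\<^sup>2 / l \<le> inner G (x - y)"
    by (simp add: power2_eq_square field_simps)
  with \<open>0 < l\<close> show ?thesis
    by (simp add: G_def pos_divide_le_eq mult.commute)
qed

text \<open>The radius \<open>5 * r\<close> leaves room for the test points of the cocoercivity argument:
  if \<open>norm y \<le> r\<close> and \<open>norm xs \<le> r\<close>, they lie within \<open>r + 2 * norm (y - xs) \<le> 5 * r\<close>.\<close>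

locale smooth_strongly_convex_ball =
  fixes f :: "'a::real_inner \<Rightarrow> real" and g :: "'a \<Rightarrow> 'a" and xs :: 'a and r \<mu> L :: real
  assumes gradient: "\<And>y. GDERIV f y :> g y"
    and minimum: "\<And>y. f xs \<le> f y"
    and norm_minimizer: "norm xs \<le> r"
    and mu_pos: "0 < \<mu>" and mu_less_L: "\<mu> < L"
    and strongly_monotone: "\<And>u v. u \<in> cball 0 (5 * r) \<Longrightarrow> v \<in> cball 0 (5 * r) \<Longrightarrow>
                              \<mu> * (norm (v - u))\<^sup>2 \<le> inner (g v - g u) (v - u)"
    and lipschitz: "\<And>u v. u \<in> cball 0 (5 * r) \<Longrightarrow> v \<in> cball 0 (5 * r) \<Longrightarrow>
                      norm (g u - g v) \<le> L * norm (u - v)"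
begin

lemma gradient_at_minimizer: "g xs = 0"
  using gradient_eq_0_at_minimum[OF gradient minimum] .

lemma r_nonneg: "0 \<le> r"
  using norm_minimizer norm_ge_zero order_trans by blast

lemma L_pos: "0 < L"
  using mu_pos mu_less_L by simp

lemma mem_cball_5r: "norm y \<le> r \<Longrightarrow> y \<in> cball 0 (5 * r)"
  using r_nonneg by simp

lemma quadratic_lower_bound:
  "u \<in> cball 0 (5 * r) \<Longrightarrow> w \<in> cball 0 (5 * r) \<Longrightarrow>
     f u + inner (g u) (w - u) + \<mu> / 2 * (norm (w - u))\<^sup>2 \<le> f w"
  by (rule strongly_monotone_gradient_imp_quadratic_lower_bound[OF gradient convex_cball
        strongly_monotone])

lemma quadratic_upper_bound:
  "u \<in> cball 0 (5 * r) \<Longrightarrow> w \<in> cball 0 (5 * r) \<Longrightarrow>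
     f w \<le> f u + inner (g u) (w - u) + L / 2 * (norm (w - u))\<^sup>2"
  by (rule lipschitz_gradient_imp_quadratic_upper_bound[OF gradient convex_cball lipschitz])

lemma gradient_norm_le: "norm y \<le> r \<Longrightarrow> norm (g y) \<le> L * norm (y - xs)"
  using lipschitz[OF mem_cball_5r mem_cball_5r[OF norm_minimizer]] by (simp add: gradient_at_minimizer)

lemma polyak_lojasiewicz:
  assumes "norm y \<le> r"
  shows "2 * \<mu> * (f y - f xs) \<le> (norm (g y))\<^sup>2"
proof -
  define D where "D = norm (y - xs)"
  have "f y + inner (g y) (xs - y) + \<mu> / 2 * D\<^sup>2 \<le> f xs"
    using quadratic_lower_bound[OF mem_cball_5r[OF assms] mem_cball_5r[OF norm_minimizer]]
    by (simp add: D_def norm_minus_commute)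
  moreover have "- inner (g y) (xs - y) \<le> norm (g y) * D"
    using norm_cauchy_schwarz[of "g y" "y - xs"] by (simp add: D_def inner_diff_right)
  ultimately have "2 * \<mu> * (f y - f xs) \<le> 2 * \<mu> * (norm (g y) * D - \<mu> / 2 * D\<^sup>2)"
    using mu_pos by (intro mult_left_mono) auto
  also have "\<dots> \<le> (norm (g y))\<^sup>2"
    using zero_le_power2[of "norm (g y) - \<mu> * D"] by (simp add: power2_eq_square algebra_simps)
  finally show ?thesis .
qed

lemma cocoercivity:
  assumes "norm y \<le> r"
  shows "(norm (g y))\<^sup>2 + \<mu> * L * (norm (y - xs))\<^sup>2 \<le> (L + \<mu>) * inner (g y) (y - xs)"
proof -
  define \<psi> where "\<psi> z = f z - \<mu> / 2 * inner z z" for z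
  define d where "d z = g z - \<mu> *\<^sub>R z" for z
  have norm_diff: "(norm (w - u))\<^sup>2 = inner w w - 2 * inner u w + inner u u" for u w :: 'a
    by (simp add: power2_norm_eq_inner inner_diff_left inner_diff_right inner_commute)
  have "(norm (d y - d xs))\<^sup>2 \<le> (L - \<mu>) * inner (d y - d xs) (y - xs)"
  proof (rule cocoercivity_from_quadratic_bounds)
    show "\<psi> u + inner (d u) (w - u) \<le> \<psi> w"
      if "u \<in> cball 0 (5 * r)" "w \<in> cball 0 (5 * r)" for u w
      using quadratic_lower_bound[OF that] unfolding \<psi>_def d_def norm_diff
      by (simp add: inner_diff_left inner_diff_right inner_commute algebra_simps)
    show "\<psi> w \<le> \<psi> u + inner (d u) (w - u) + (L - \<mu>) / 2 * (norm (w - u))\<^sup>2"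
      if "u \<in> cball 0 (5 * r)" "w \<in> cball 0 (5 * r)" for u w
      using quadratic_upper_bound[OF that] unfolding \<psi>_def d_def norm_diff
      by (simp add: inner_diff_left inner_diff_right inner_commute field_simps)
    show "y - t *\<^sub>R (d y - d xs) \<in> cball 0 (5 * r) \<and> xs + t *\<^sub>R (d y - d xs) \<in> cball 0 (5 * r)"
      if "0 \<le> t" "t * norm (d y - d xs) \<le> 2 * norm (y - xs)" for t
    proof -
      have "norm (y - xs) \<le> 2 * r"
        using norm_triangle_ineq4[of y xs] assms norm_minimizer by linarith
      then have "norm (t *\<^sub>R (d y - d xs)) \<le> 4 * r"
        using that by simp
      then show ?thesis
        using norm_triangle_ineq4[of y "t *\<^sub>R (d y - d xs)"] norm_triangle_ineq[of xs "t *\<^sub>R (d y - d xs)"]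
          assms norm_minimizer by auto
    qed
  qed (use mem_cball_5r assms norm_minimizer mu_less_L in auto)
  moreover have "d y - d xs = g y - \<mu> *\<^sub>R (y - xs)"
    by (simp add: d_def gradient_at_minimizer algebra_simps)
  ultimately show ?thesis
    by (simp add: power2_norm_eq_inner inner_diff_left inner_diff_right inner_commute algebra_simps)
qed

lemma gradient_norm_sq_le_gap:
  assumes "norm y \<le> r"
  shows "(norm (g y))\<^sup>2 \<le> 2 * L\<^sup>2 / \<mu> * (f y - f xs)"
proof -
  define D where "D = norm (y - xs)"
  have "\<mu> / 2 * D\<^sup>2 \<le> f y - f xs"
    using quadratic_lower_bound[OF mem_cball_5r[OF norm_minimizer] mem_cball_5r[OF assms]]
    by (simp add: D_def gradient_at_minimizer)
  have "(norm (g y))\<^sup>2 \<le> (L * D)\<^sup>2"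
    using gradient_norm_le[OF assms] by (simp add: D_def power_mono)
  also have "\<dots> = 2 * L\<^sup>2 / \<mu> * (\<mu> / 2 * D\<^sup>2)"
    using mu_pos by (simp add: power_mult_distrib)
  also have "\<dots> \<le> 2 * L\<^sup>2 / \<mu> * (f y - f xs)"
    using \<open>\<mu> / 2 * D\<^sup>2 \<le> f y - f xs\<close> mu_pos by (intro mult_left_mono) auto
  finally show ?thesis .
qed

lemma step_mem_cball:
  assumes "norm y \<le> r" "0 \<le> a" "a \<le> 1 / L"
  shows "y - a *\<^sub>R g y \<in> cball 0 (5 * r)"
proof -
  have "a * L \<le> 1"
    using assms(3) L_pos by (simp add: field_simps)
  have "a * norm (g y) \<le> a * (L * norm (y - xs))"
    using gradient_norm_le[OF assms(1)] assms(2) by (rule mult_left_mono)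
  also have "\<dots> \<le> norm (y - xs)"
    using \<open>a * L \<le> 1\<close> mult_right_mono[OF \<open>a * L \<le> 1\<close> norm_ge_zero[of "y - xs"]] by (simp add: mult.assoc)
  also have "\<dots> \<le> 2 * r"
    using norm_triangle_ineq4[of y xs] assms(1) norm_minimizer by linarith
  finally have "norm (y - a *\<^sub>R g y) \<le> 3 * r"
    using norm_triangle_ineq4[of y "a *\<^sub>R g y"] assms(1,2) by simp
  then show ?thesis
    using r_nonneg by simp
qed

lemma step_descent:
  assumes "norm y \<le> r" "0 \<le> a" "a \<le> 1 / L"
  shows "f (y - a *\<^sub>R g y) \<le> f y - a / 2 * (norm (g y))\<^sup>2"
proof -
  have "L * a \<le> 1"
    using assms(3) L_pos by (simp add: field_simps)
  with assms(2) have "L * a\<^sup>2 \<le> a"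
    using mult_right_mono[of "L * a" 1 a] by (simp add: power2_eq_square mult.assoc)
  have "f (y - a *\<^sub>R g y) \<le> f y + inner (g y) (- a *\<^sub>R g y) + L / 2 * (norm (- a *\<^sub>R g y))\<^sup>2"
    using quadratic_upper_bound[OF mem_cball_5r[OF assms(1)] step_mem_cball[OF assms]] by simp
  also have "\<dots> = f y - a * (norm (g y))\<^sup>2 + (L * a\<^sup>2) / 2 * (norm (g y))\<^sup>2"
    by (simp add: power2_norm_eq_inner power_mult_distrib)
  also have "\<dots> \<le> f y - a * (norm (g y))\<^sup>2 + a / 2 * (norm (g y))\<^sup>2"
    using mult_right_mono[OF \<open>L * a\<^sup>2 \<le> a\<close> zero_le_power2[of "norm (g y)"]] by simp
  finally show ?thesis
    by simp
qed

lemma step_value_contraction: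
  assumes "norm y \<le> r" "0 \<le> a" "a \<le> 1 / L"
  shows "f (y - a *\<^sub>R g y) - f xs \<le> (1 - \<mu> * a) * (f y - f xs)"
proof -
  have "a / 2 * (2 * \<mu> * (f y - f xs)) \<le> a / 2 * (norm (g y))\<^sup>2"
    using polyak_lojasiewicz[OF assms(1)] assms(2) by (intro mult_left_mono) auto
  with step_descent[OF assms] show ?thesis
    by (simp add: algebra_simps)
qed

lemma step_distance_contraction:
  assumes "norm y \<le> r" "0 \<le> b" "b \<le> a" "a \<le> 1 / L"
  shows "(norm (y - a *\<^sub>R g y - xs))\<^sup>2 \<le> (1 - 2 * b * \<mu> * L / (\<mu> + L)) * (norm (y - xs))\<^sup>2"
proof -
  define D where "D = norm (y - xs)"
  define N where "N = (norm (g y))\<^sup>2"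
  define p where "p = inner (g y) (y - xs)"
  have coc: "N + \<mu> * L * D\<^sup>2 \<le> (L + \<mu>) * p"
    using cocoercivity[OF assms(1)] by (simp add: D_def N_def p_def)
  have "L * a \<le> 1"
    using assms(4) L_pos by (simp add: field_simps)
  moreover have "\<mu> * a \<le> L * a"
    using mu_less_L assms(2,3) by (simp add: mult_right_mono)
  ultimately have "a * (L + \<mu>) \<le> 2"
    by (simp add: algebra_simps)
  have "2 * b * \<mu> * L * D\<^sup>2 \<le> 2 * a * (\<mu> * L * D\<^sup>2)"
    using assms(2,3) mu_pos mu_less_L by (simp add: mult_right_mono)
  also have "\<dots> \<le> 2 * a * ((L + \<mu>) * p - N)"
    using coc assms(2,3) by (intro mult_left_mono) auto
  also have "\<dots> \<le> 2 * a * ((L + \<mu>) * p - N) + a * N * (2 - a * (L + \<mu>))"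
    using \<open>a * (L + \<mu>) \<le> 2\<close> assms(2,3) by (simp add: N_def)
  also have "\<dots> = (L + \<mu>) * (2 * a * p - a\<^sup>2 * N)"
    by (simp add: power2_eq_square algebra_simps)
  finally have "2 * b * \<mu> * L / (\<mu> + L) * D\<^sup>2 \<le> 2 * a * p - a\<^sup>2 * N"
    using mu_pos mu_less_L by (simp add: field_simps)
  moreover have "(norm (y - a *\<^sub>R g y - xs))\<^sup>2 = D\<^sup>2 - 2 * a * p + a\<^sup>2 * N"
    unfolding D_def N_def p_def power2_norm_eq_inner
    by (simp add: inner_diff_left inner_diff_right inner_commute power2_eq_square algebra_simps)
  ultimately show ?thesis
    by (simp add: D_def algebra_simps)
qed

end

locale gradient_descent_sequence = smooth_strongly_convex_ball +
  fixes x :: "nat \<Rightarrow> 'a::real_inner" and \<alpha> :: "nat \<Rightarrow> real" and \<alpha>bar :: real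
  assumes sublevel_bounded: "\<And>y. f y \<le> f (x 0) \<Longrightarrow> norm y \<le> r"
    and alpha_bar_pos: "0 < \<alpha>bar"
    and step_sizes: "\<And>k. \<alpha> k \<in> {\<alpha>bar .. 1 / L}"
    and iteration: "\<And>k. x (Suc k) = x k - \<alpha> k *\<^sub>R g (x k)"
begin

lemma iterate_in_sublevel: "f (x k) \<le> f (x 0)"
proof (induction k)
  case (Suc k)
  have "norm (x k) \<le> r" "0 \<le> \<alpha> k" "\<alpha> k \<le> 1 / L"
    using sublevel_bounded[OF Suc] step_sizes[of k] alpha_bar_pos by auto
  then have "f (x (Suc k)) \<le> f (x k) - \<alpha> k / 2 * (norm (g (x k)))\<^sup>2"
    unfolding iteration by (rule step_descent)
  also have "\<dots> \<le> f (x k)"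
    using \<open>0 \<le> \<alpha> k\<close> by simp
  finally show ?case
    using Suc by simp
qed simp

lemma norm_iterate: "norm (x k) \<le> r"
  using sublevel_bounded[OF iterate_in_sublevel] .

lemma distance_contraction:
  "(norm (x (Suc k) - xs))\<^sup>2 \<le> (1 - 2 * \<alpha>bar * \<mu> * L / (\<mu> + L)) * (norm (x k - xs))\<^sup>2"
  using step_distance_contraction[OF norm_iterate, of \<alpha>bar "\<alpha> k"] step_sizes[of k] alpha_bar_pos
  by (simp add: iteration)

lemma value_contraction:
  assumes "q \<le> \<mu> * \<alpha>bar"
  shows "f (x (Suc k)) - f xs \<le> (1 - q) * (f (x k) - f xs)"
proof -
  have "f (x (Suc k)) - f xs \<le> (1 - \<mu> * \<alpha> k) * (f (x k) - f xs)"
    using step_value_contraction[OF norm_iterate, of "\<alpha> k"] step_sizes[of k] alpha_bar_pos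
    by (simp add: iteration)
  also have "\<dots> \<le> (1 - q) * (f (x k) - f xs)"
  proof (rule mult_right_mono)
    have "\<mu> * \<alpha>bar \<le> \<mu> * \<alpha> k"
      using step_sizes[of k] mu_pos by simp
    with assms show "1 - \<mu> * \<alpha> k \<le> 1 - q"
      by simp
  qed (use minimum[of "x k"] in simp)
  finally show ?thesis .
qed

lemma mu_alpha_bar_le_1: "\<mu> * \<alpha>bar \<le> 1"
proof -
  have "\<mu> * \<alpha>bar \<le> L * (1 / L)"
    using step_sizes[of 0] mu_less_L alpha_bar_pos L_pos by (intro mult_mono) auto
  then show ?thesis
    using L_pos by simp
qed

lemma value_linear_rate:
  assumes "q \<le> \<mu> * \<alpha>bar"
  shows "f (x k) - f xs \<le> (1 - q) ^ k * (f (x 0) - f xs)"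
proof (induction k)
  case (Suc k)
  have "0 \<le> 1 - q"
    using assms mu_alpha_bar_le_1 by simp
  have "f (x (Suc k)) - f xs \<le> (1 - q) * (f (x k) - f xs)"
    by (rule value_contraction[OF assms])
  also have "\<dots> \<le> (1 - q) * ((1 - q) ^ k * (f (x 0) - f xs))"
    using Suc \<open>0 \<le> 1 - q\<close> by (rule mult_left_mono)
  finally show ?case
    by simp
qed simp

lemma gradient_linear_rate:
  assumes "q \<le> \<mu> * \<alpha>bar"
  shows "norm (g (x k)) \<le> sqrt 2 * L / sqrt \<mu> * sqrt (f (x 0) - f xs) * sqrt ((1 - q) ^ k)"
proof -
  have "(norm (g (x k)))\<^sup>2 \<le> 2 * L\<^sup>2 / \<mu> * (f (x k) - f xs)"
    by (rule gradient_norm_sq_le_gap[OF norm_iterate])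
  also have "\<dots> \<le> 2 * L\<^sup>2 / \<mu> * ((1 - q) ^ k * (f (x 0) - f xs))"
    using value_linear_rate[OF assms] mu_pos by (intro mult_left_mono) auto
  finally have "norm (g (x k)) \<le> sqrt (2 * L\<^sup>2 / \<mu> * ((1 - q) ^ k * (f (x 0) - f xs)))"
    by (simp add: real_le_rsqrt)
  also have "\<dots> = sqrt 2 * L / sqrt \<mu> * sqrt (f (x 0) - f xs) * sqrt ((1 - q) ^ k)"
    using L_pos by (simp add: real_sqrt_mult real_sqrt_divide)
  finally show ?thesis .
qed

end

theorem theorem3p16:
  fixes f :: "'a::euclidean_space \<Rightarrow> real" and g :: "'a \<Rightarrow> 'a"
    and x :: "nat \<Rightarrow> 'a" and \<alpha> :: "nat \<Rightarrow> real"
    and xs :: 'a and r L \<mu> \<alpha>bar q0 q1 :: real and \<Omega> :: "'a set"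
  assumes grad: "\<And>y. GDERIV f y :> g y"
    and cont_grad: "continuous_on UNIV g"
    and lip_grad: "loc_lipschitz_map g"
    and cvx: "convex_on UNIV f"
    and lsc: "loc_strongly_convex f g"
    and xs_opt: "\<And>y. f xs \<le> f y"
    and bdd: "bounded {y. f y \<le> f (x 0)}"
    and r_max: "r \<in> norm ` {y. f y \<le> f (x 0)}" "\<And>y. f y \<le> f (x 0) \<Longrightarrow> norm y \<le> r"
    and Omega: "\<Omega> = cball 0 (5 * r)"
    and L_pos: "L > 0"
    and L_lip: "\<And>y z. y \<in> \<Omega> \<Longrightarrow> z \<in> \<Omega> \<Longrightarrow> norm (g y - g z) \<le> L * norm (y - z)"
    and mu_def: "\<mu> = Inf {inner (g v - g u) (v - u) / (norm (v - u))\<^sup>2 | u v. u \<in> \<Omega> \<and> v \<in> \<Omega> \<and> u \<noteq> v}"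
    and mu_L: "\<mu> < L"
    and abar: "0 < \<alpha>bar" "\<alpha>bar < 1 / L"
    and steps: "\<And>k. \<alpha> k \<in> {\<alpha>bar .. 1 / L}"
    and iter: "\<And>k. x (Suc k) = x k - \<alpha> k *\<^sub>R g (x k)"
    and q0_def: "q0 = 2 * \<alpha>bar * \<mu> * L / (\<mu> + L)"
    and q1_def: "q1 = \<mu>\<^sup>2 * \<alpha>bar\<^sup>2 / 4"
  shows "(\<forall>k. (norm (x (Suc k) - xs))\<^sup>2 \<le> (1 - q0) * (norm (x k - xs))\<^sup>2
              \<and> f (x (Suc k)) - f xs \<le> (1 - q1) * (f (x k) - f xs))
       \<and> (\<forall>k. norm (g (x k)) \<le> sqrt 2 * L / sqrt \<mu> * sqrt (f (x 0) - f xs) * sqrt ((1 - q1) ^ k))"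
proof -
  have gxs: "g xs = 0"
    using gradient_eq_0_at_minimum[OF grad xs_opt] .
  have "norm xs \<le> r"
    using r_max(2) xs_opt by blast
  show ?thesis
  proof (cases "r = 0")
    case True
    text \<open>Then \<open>\<Omega> = {0}\<close> and \<open>\<mu>\<close> is the junk value \<open>Inf {}\<close>, but the iteration is
      stationary at the minimizer \<open>0\<close>.\<close>
    then have "x 0 = xs"
      using r_max(2)[of "x 0"] \<open>norm xs \<le> r\<close> by simp
    then have "x k = xs" for k
      by (induction k) (simp_all add: iter gxs)
    then show ?thesis
      by (simp add: gxs)
  next
    case False
    with \<open>norm xs \<le> r\<close> have "0 < r"
      using norm_ge_zero[of xs] by linarith
    have mu: "\<mu> = monotonicity_modulus g (cball 0 (5 * r))"
      by (simp add: mu_def Omega monotonicity_modulus_def)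
    have modulus: "0 < \<mu>"
      "\<And>u v. u \<in> cball 0 (5 * r) \<Longrightarrow> v \<in> cball 0 (5 * r) \<Longrightarrow>
         \<mu> * (norm (v - u))\<^sup>2 \<le> inner (g v - g u) (v - u)"
      unfolding mu using loc_strongly_convex_monotonicity_modulus_cball[OF grad cvx lsc] \<open>0 < r\<close>
      by simp_all
    interpret gradient_descent_sequence f g xs r \<mu> L x \<alpha> \<alpha>bar
      by (unfold_locales; fact grad xs_opt \<open>norm xs \<le> r\<close> modulus mu_L L_lip[unfolded Omega]
          r_max(2) abar(1) steps iter)
    have "q1 \<le> \<mu> * \<alpha>bar"
      using mu_alpha_bar_le_1 mu_pos abar
      by (simp add: q1_def power_mult_distrib[symmetric] power2_eq_square mult_left_le)
    then show ?thesis
      using distance_contraction value_contraction gradient_linear_rate by (simp add: q0_def)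
  qed
qed

end
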